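(* Let $G$ be a graph of order $n$ with minimum degree $\delta$ and let $\mu=\mu(G)$. If $(x_1,\ldots,x_n)$ is a unit eigenvector of the adjacency matrix of $G$ for the eigenvalue $\mu$, then \[ \min\{x_1,\ldots,x_n\}\leq\sqrt{\frac{\delta}{\mu^2+\delta n-\delta^2}}. \]
   Context: All graphs are finite and simple; $\mu(G)$ denotes the largest eigenvalue of the adjacency matrix of $G$; vertices of $G$ are identified with $1,\ldots,n$ and the eigenvector is indexed by vertices. *)

theory Defs
  imports Complex_Main "Jordan_Normal_Form.Char_Poly"
begin

definition simple_graph :: "nat \<Rightarrow> (nat \<Rightarrow> nat \<Rightarrow> bool) \<Rightarrow> bool" where
  "simple_graph n E \<longleftrightarrow> (\<forall>i<n. \<forall>j<n. (E i j \<longleftrightarrow> E j i)) \<and> (\<forall>i<n. \<not> E i i)"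

definition adj_mat :: "nat \<Rightarrow> (nat \<Rightarrow> nat \<Rightarrow> bool) \<Rightarrow> real mat" where
  "adj_mat n E = mat n n (\<lambda>(i, j). if E i j then 1 else 0)"

definition degree :: "nat \<Rightarrow> (nat \<Rightarrow> nat \<Rightarrow> bool) \<Rightarrow> nat \<Rightarrow> nat" where
  "degree n E i = card {j. j < n \<and> E i j}"

definition min_degree :: "nat \<Rightarrow> (nat \<Rightarrow> nat \<Rightarrow> bool) \<Rightarrow> nat" where
  "min_degree n E = Min (degree n E ` {0..<n})"

definition spectral_radius_graph :: "nat \<Rightarrow> (nat \<Rightarrow> nat \<Rightarrow> bool) \<Rightarrow> real" where
  "spectral_radius_graph n E = Max {k. eigenvalue (adj_mat n E) k}"

end

theory Submission
  imports Defs "HOL-Analysis.Convex"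
begin

text \<open>Let \<open>u\<close> be a vertex of minimum degree \<open>\<delta>\<close> and \<open>m\<close> the least entry of the unit
  eigenvector \<open>x\<close>, which we may assume positive. The eigen-equation at \<open>u\<close> and the
  Cauchy--Schwarz inequality give \<open>\<mu>\<^sup>2 m\<^sup>2 \<le> \<mu>\<^sup>2 x\<^sub>u\<^sup>2 = (\<Sum>\<^sub>j\<^sub>\<sim>\<^sub>u x\<^sub>j)\<^sup>2 \<le> \<delta> \<Sum>\<^sub>j\<^sub>\<sim>\<^sub>u x\<^sub>j\<^sup>2\<close>, and the
  normalisation, after bounding every entry outside the closed neighbourhood of \<open>u\<close>
  by \<open>m\<close>, gives \<open>\<Sum>\<^sub>j\<^sub>\<sim>\<^sub>u x\<^sub>j\<^sup>2 \<le> 1 - (n - \<delta>) m\<^sup>2\<close>. Together,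
  \<open>m\<^sup>2 (\<mu>\<^sup>2 + \<delta> n - \<delta>\<^sup>2) \<le> \<delta>\<close>.\<close>

definition neighbourhood :: "nat \<Rightarrow> (nat \<Rightarrow> nat \<Rightarrow> bool) \<Rightarrow> nat \<Rightarrow> nat set" where
  "neighbourhood n E i = {j. j < n \<and> E i j}"

lemma degree_eq_card_neighbourhood: "degree n E i = card (neighbourhood n E i)"
  by (simp add: degree_def neighbourhood_def)

lemma neighbourhood_subset: "neighbourhood n E i \<subseteq> {..<n}"
  by (auto simp: neighbourhood_def)

lemma not_in_neighbourhood_self: "simple_graph n E \<Longrightarrow> i \<notin> neighbourhood n E i"
  by (simp add: simple_graph_def neighbourhood_def)

lemma min_degree_attained:
  assumes "n \<ge> 1"
  obtains u where "u < n" "degree n E u = min_degree n E"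
proof -
  have "min_degree n E \<in> degree n E ` {0..<n}"
    unfolding min_degree_def using assms by (intro Min_in) auto
  with that show ?thesis by auto
qed

lemma adj_mat_mult_vec_nth:
  assumes "i < n" "dim_vec x = n"
  shows "(adj_mat n E *\<^sub>v x) $ i = (\<Sum>j\<in>neighbourhood n E i. x $ j)"
proof -
  have "(adj_mat n E *\<^sub>v x) $ i = (\<Sum>j<n. (if E i j then 1 else 0) * x $ j)"
    using assms by (simp add: adj_mat_def scalar_prod_def lessThan_atLeast0)
  also have "\<dots> = (\<Sum>j\<in>{..<n} \<inter> {j. E i j}. x $ j)"
    by (auto simp: sum.inter_restrict intro!: sum.cong)
  finally show ?thesis
    by (simp add: neighbourhood_def Int_def conj_commute)
qed

lemma eigenvector_adj_mat_nth:
  assumes "eigenvector (adj_mat n E) x \<mu>" "i < n"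
  shows "\<mu> * x $ i = (\<Sum>j\<in>neighbourhood n E i. x $ j)"
proof -
  have "dim_vec x = n" "adj_mat n E *\<^sub>v x = \<mu> \<cdot>\<^sub>v x"
    using assms(1) by (auto simp: eigenvector_def adj_mat_def)
  then show ?thesis
    using assms(2) by (metis adj_mat_mult_vec_nth index_smult_vec(1))
qed

lemma scalar_prod_self_eq_sum_squares:
  "dim_vec x = n \<Longrightarrow> x \<bullet> x = (\<Sum>i<n. (x $ i)\<^sup>2)" for x :: "real vec"
  by (simp add: scalar_prod_def power2_eq_square lessThan_atLeast0)

lemma card_mult_square_le_sum_squares:
  fixes f :: "'a \<Rightarrow> real"
  assumes "finite V" "\<And>i. i \<in> V \<Longrightarrow> 0 \<le> m \<and> m \<le> f i"
  shows "real (card V) * m\<^sup>2 \<le> (\<Sum>i\<in>V. (f i)\<^sup>2)"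
proof -
  have "(\<Sum>i\<in>V. m\<^sup>2) \<le> (\<Sum>i\<in>V. (f i)\<^sup>2)"
    using assms(2) by (intro sum_mono power_mono) auto
  then show ?thesis by simp
qed

lemma square_lower_bound_le_of_local_eigen_equation:
  fixes f :: "'a \<Rightarrow> real"
  assumes fin: "finite V" and u: "u \<in> V" and N: "N \<subseteq> V - {u}"
    and unit: "(\<Sum>i\<in>V. (f i)\<^sup>2) = 1"
    and lower: "\<And>i. i \<in> V \<Longrightarrow> 0 \<le> m \<and> m \<le> f i"
    and eigen: "\<mu> * f u = (\<Sum>j\<in>N. f j)"
  shows "m\<^sup>2 * (\<mu>\<^sup>2 + real (card N) * real (card V) - (real (card N))\<^sup>2) \<le> real (card N)"
proof -
  define R where "R = V - N - {u}"
  have finN: "finite N" and finR: "finite R"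
    using fin N finite_subset by (auto simp: R_def)
  have "V = insert u (N \<union> R)" and "u \<notin> N \<union> R" and "N \<inter> R = {}"
    using u N by (auto simp: R_def)
  then have cardR: "real (card R) = real (card V) - real (card N) - 1"
    and "(\<Sum>i\<in>V. (f i)\<^sup>2) = (f u)\<^sup>2 + (\<Sum>j\<in>N. (f j)\<^sup>2) + (\<Sum>j\<in>R. (f j)\<^sup>2)"
    using finN finR by (simp_all add: card_Un_disjoint sum.union_disjoint)
  moreover have "(real (card V) - real (card N) - 1) * m\<^sup>2 \<le> (\<Sum>j\<in>R. (f j)\<^sup>2)"
    unfolding cardR[symmetric] using finR lower
    by (intro card_mult_square_le_sum_squares) (auto simp: R_def)
  moreover have fu: "m\<^sup>2 \<le> (f u)\<^sup>2"
    using lower[OF u] by (intro power_mono) auto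
  ultimately have N_mass: "(\<Sum>j\<in>N. (f j)\<^sup>2) \<le> 1 - m\<^sup>2 - (real (card V) - real (card N) - 1) * m\<^sup>2"
    using unit by linarith
  have "\<mu>\<^sup>2 * m\<^sup>2 \<le> (\<mu> * f u)\<^sup>2"
    using fu by (simp add: power_mult_distrib mult_left_mono)
  also have "\<dots> \<le> real (card N) * (\<Sum>j\<in>N. (f j)\<^sup>2)"
    using sum_squared_le_sum_of_squares[of f N] by (simp add: eigen mult.commute)
  also have "\<dots> \<le> real (card N) * (1 - m\<^sup>2 - (real (card V) - real (card N) - 1) * m\<^sup>2)"
    using N_mass by (simp add: mult_left_mono)
  finally show ?thesis
    by (simp add: algebra_simps power2_eq_square)
qed

theorem lemma1:
  fixes n :: nat and E :: "nat \<Rightarrow> nat \<Rightarrow> bool" and x :: "real vec"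
  assumes "simple_graph n E"
    and "n \<ge> 1"
    and "spectral_radius_graph n E ^ 2 + real (min_degree n E) * real n - real (min_degree n E) ^ 2 > 0"
    and "eigenvector (adj_mat n E) x (spectral_radius_graph n E)"
    and "x \<bullet> x = 1"
  shows "Min {x $ i | i. i < n} \<le>
    sqrt (real (min_degree n E) /
      (spectral_radius_graph n E ^ 2 + real (min_degree n E) * real n - real (min_degree n E) ^ 2))"
    (is "?m \<le> sqrt (?\<delta> / ?D)")
proof (cases "?m \<le> 0")
  case True
  moreover have "0 \<le> sqrt (?\<delta> / ?D)"
    using assms(3) by simp
  ultimately show ?thesis by linarith
next
  case False
  have dim: "dim_vec x = n"
    using assms(4) by (simp add: eigenvector_def adj_mat_def)
  have lower: "0 \<le> ?m \<and> ?m \<le> x $ i" if "i < n" for i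
    using False that by (auto intro!: Min_le)
  obtain u where u: "u < n" "degree n E u = min_degree n E"
    using min_degree_attained[OF assms(2)] .
  let ?N = "neighbourhood n E u"
  have "?m\<^sup>2 * ((spectral_radius_graph n E)\<^sup>2 + real (card ?N) * real (card {..<n})
      - (real (card ?N))\<^sup>2) \<le> real (card ?N)"
  proof (rule square_lower_bound_le_of_local_eigen_equation)
    show "?N \<subseteq> {..<n} - {u}"
      using neighbourhood_subset not_in_neighbourhood_self[OF assms(1)] by blast
    show "(\<Sum>i<n. (x $ i)\<^sup>2) = 1"
      using assms(5) scalar_prod_self_eq_sum_squares[OF dim] by simp
    show "spectral_radius_graph n E * x $ u = (\<Sum>j\<in>?N. x $ j)"
      using eigenvector_adj_mat_nth[OF assms(4) u(1)] .
  qed (use u lower in auto)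
  then have "?m\<^sup>2 * ?D \<le> ?\<delta>"
    using u(2) by (simp add: degree_eq_card_neighbourhood)
  then have "?m\<^sup>2 \<le> ?\<delta> / ?D"
    using assms(3) by (simp add: pos_le_divide_eq)
  then show ?thesis
    using False real_sqrt_le_mono by fastforce
qed

end
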